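(* Let $k\ge 4$, $n=2k-1$, $\lambda\in\overline{\mathcal{U}}_{T_n}$, and let $Y=\mathrm{KN}(S_\lambda)$. Write the elements of $S_\lambda$ increasingly as $0=s_0<s_1<s_2<\cdots$ and let $z$ be the index with $s_z=n-2$. Then $$\sum_{i=2}^{z} h_{i,z+1}=k,$$ where $h_{i,j}$ denotes the hook length of the cell of $Y$ in row $i$ and column $j$.
   Context: A partition of $N$ into distinct parts is a sequence $\lambda=(\lambda_1<\dots<\lambda_t)$ of positive integers with sum $N$ and $t\ge 2$, identified with its set of parts. Missing parts: $\mathcal{M}_\lambda=\{1,\dots,\lambda_t\}\setminus\lambda$. $\lambda$ is refinable if two distinct missing parts sum to a part of $\lambda$, unrefinable otherwise; $\mathcal{U}_N$ is the set of unrefinable partitions of $N$. An element of $\mathcal{U}_N$ is maximal if its largest part is the maximum of the largest parts of elements of $\mathcal{U}_N$; $\widetilde{\mathcal{U}}_N$ is the set of these and $\overline{\mathcal{U}}_N=\{\lambda\in\widetilde{\mathcal{U}}_N:\#\mathcal{M}_\lambda=\lfloor\lambda_t/2\rfloor\}$. $T_n=n(n+1)/2$. For $\lambda\in\overline{\mathcal{U}}_{T_n}$ (with $n=2k-1$, $k\ge 4$) one knows $\lambda_t=2n-4$, $t=n-2$ and $n-2\notin\lambda$. $S_\lambda=\mathbb{N}_0\setminus\lambda$. The Keith–Nath transformation sends a set $S\subseteq\mathbb{N}_0$ with $0\in S$ and finite complement to the Young diagram $\mathrm{KN}(S)$ whose boundary is the lattice path that, starting at the origin, takes for $j=0,1,\dots,\max(\mathbb{N}_0\setminus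 S)$ an east step if $j\in S$ and a north step otherwise. Diagrams are in English convention (rows numbered top to bottom, columns left to right); hook length = (cells to the right in the row) + (cells below in the column) + 1. *)

theory Defs
  imports Main "HOL-Library.Infinite_Set"
begin

definition distinct_partition :: "nat \<Rightarrow> nat set \<Rightarrow> bool" where
  "distinct_partition N lam \<longleftrightarrow> finite lam \<and> 0 \<notin> lam \<and> card lam \<ge> 2 \<and> \<Sum>lam = N"

definition missing_parts :: "nat set \<Rightarrow> nat set" where
  "missing_parts lam = {1..Max lam} - lam"

definition refinable :: "nat set \<Rightarrow> bool" where
  "refinable lam \<longleftrightarrow> (\<exists>a\<in>missing_parts lam. \<exists>b\<in>missing_parts lam. a \<noteq> b \<and> a + b \<in> lam)"

definition unrefinable_set :: "nat \<Rightarrow> nat set set" where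
  "unrefinable_set N = {lam. distinct_partition N lam \<and> \<not> refinable lam}"

definition maximal_unrefinable :: "nat \<Rightarrow> nat set set" where
  "maximal_unrefinable N = {lam \<in> unrefinable_set N. \<forall>mu\<in>unrefinable_set N. Max mu \<le> Max lam}"

definition overline_U :: "nat \<Rightarrow> nat set set" where
  "overline_U N = {lam \<in> maximal_unrefinable N. card (missing_parts lam) = Max lam div 2}"

definition T :: "nat \<Rightarrow> nat" where
  "T n = n * (n + 1) div 2"

text \<open>Keith--Nath: boundary path, True = east step, False = north step, for j = 0..max gap.\<close>
definition kn_path :: "nat set \<Rightarrow> bool list" where
  "kn_path S = map (\<lambda>j. j \<in> S) [0..<Suc (Max (UNIV - S))]"

text \<open>Young diagram as a set of cells (row, column), 1-indexed, English convention
  (rows numbered top to bottom). The north step preceded by r north steps bounds the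
  row N - r (N = total number of north steps), whose length is the number of east steps
  before it.\<close>
definition KN :: "nat set \<Rightarrow> (nat \<times> nat) set" where
  "KN S = (let P = kn_path S; N = length (filter Not P) in
     {(i, j). 1 \<le> i \<and> i \<le> N \<and> 1 \<le> j \<and>
        (\<exists>p < length P. \<not> P ! p \<and> length (filter Not (take p P)) = N - i
            \<and> j \<le> length (filter id (take p P)))})"

definition hook_length :: "(nat \<times> nat) set \<Rightarrow> nat \<Rightarrow> nat \<Rightarrow> nat" where
  "hook_length Y i j = card {j'. j < j' \<and> (i, j') \<in> Y} + card {i'. i < i' \<and> (i', j) \<in> Y} + 1"

end

theory Submission
  imports Defs
begin

text \<open>
  Let \<open>m\<close> be the largest part of \<open>\<lambda>\<close>. Non-refinability makes \<open>x \<mapsto> min x (m - x)\<close>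
  injective on the missing parts; with exactly \<open>m div 2\<close> of them it is onto \<open>{1..m div 2}\<close>,
  so for \<open>2a < m\<close> exactly one of \<open>a\<close>, \<open>m - a\<close> is a part, and \<open>m/2\<close> is not a part. Hence
  \<open>T n = T r + m + \<Sum>a\<in>D. (m - 2a)\<close>, with \<open>r = (m - 1) div 2\<close> and \<open>D\<close> the missing
  parts up to \<open>r\<close>. This forces \<open>m \<le> 2n - 4\<close>, and the unrefinable partition
  \<open>{1..n-3} \<union> {n+1, 2n-4}\<close> of \<open>T n\<close> shows that maximality gives equality. Then \<open>n - 2\<close>
  is missing and \<open>\<Sum>a\<in>D. (n - 2 - a) = k\<close>.

  In the Keith--Nath diagram the cell in the row of a part \<open>p\<close> and the column of a gap
  \<open>t < p\<close> has hook length \<open>p - t\<close>. The column of the gap \<open>n - 2\<close> is column \<open>z + 1\<close>;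
  its rows \<open>2..z\<close> belong to the parts \<open>m - a\<close> (\<open>a \<in> D\<close>), with hook lengths \<open>n - 2 - a\<close>.
\<close>

lemma T_Suc: "T (Suc n) = T n + Suc n"
  by (simp add: T_def)

lemma T_eq_sum: "T n = \<Sum>{1..n}"
  by (induction n) (simp_all add: T_Suc, simp add: T_def)

lemma T_minus_2: "2 \<le> n \<Longrightarrow> T n = T (n - 2) + (n - 1) + n"
  using T_Suc[of "n - 1"] T_Suc[of "n - 2"] by (simp add: Suc_diff_Suc numeral_2_eq_2)

lemma T_minus_3: "3 \<le> n \<Longrightarrow> T n = T (n - 3) + (n - 2) + (n - 1) + n"
  using T_Suc[of "n - 1"] T_Suc[of "n - 2"] T_Suc[of "n - 3"]
  by (simp add: Suc_diff_Suc numeral_2_eq_2 numeral_3_eq_3)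

lemma T_mono: "a \<le> b \<Longrightarrow> T a \<le> T b"
  unfolding T_def by (intro div_le_mono mult_le_mono) simp_all

definition part_row :: "nat set \<Rightarrow> nat \<Rightarrow> nat" where
  "part_row L p = card {q \<in> L. p \<le> q}"

definition gaps_below :: "nat set \<Rightarrow> nat \<Rightarrow> nat" where
  "gaps_below L p = card {x. x < p \<and> x \<notin> L}"

lemma part_row_ge_1: "finite L \<Longrightarrow> p \<in> L \<Longrightarrow> 1 \<le> part_row L p"
  unfolding part_row_def by (auto simp: Suc_le_eq card_gt_0_iff)

lemma length_filter_map_upt: "length (filter P (map f [0..<n])) = card {i. i < n \<and> P (f i)}"
  unfolding length_filter_conv_card by (rule arg_cong[where f = card]) auto

lemma mem_KN_complement_iff:
  assumes fin: "finite L"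
  shows "(i, j) \<in> KN (UNIV - L) \<longleftrightarrow> (\<exists>p\<in>L. i = part_row L p \<and> 1 \<le> j \<and> j \<le> gaps_below L p)"
proof -
  define P where "P = kn_path (UNIV - L)"
  have P: "P = map (\<lambda>x. x \<notin> L) [0..<Suc (Max L)]"
    by (simp add: P_def kn_path_def Diff_Diff_Int)
  have le_Max: "x \<in> L \<Longrightarrow> x < length P" for x using fin by (simp add: P le_imp_less_Suc)
  have north: "length (filter Not P) = card L"
    unfolding P length_filter_map_upt using le_Max by (intro arg_cong[where f = card]) (auto simp: P)
  have take: "take p P = map (\<lambda>x. x \<notin> L) [0..<p]" if "p < length P" for p
    using that by (simp add: P take_map)
  have step: "\<not> P ! p \<longleftrightarrow> p \<in> L" if "p < length P" for p
    using that by (simp add: P del: upt_Suc)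
  have below: "length (filter Not (take p P)) = card {q \<in> L. q < p}"
    and east: "length (filter id (take p P)) = gaps_below L p"
    if "p < length P" for p
    unfolding take[OF that] length_filter_map_upt gaps_below_def
    by (intro arg_cong[where f = card]; auto)+
  have row: "(1 \<le> i \<and> i \<le> card L \<and> card {q \<in> L. q < p} = card L - i) \<longleftrightarrow> i = part_row L p"
    if "p \<in> L" for p i
  proof -
    have "card L = card ({q \<in> L. q < p} \<union> {q \<in> L. p \<le> q})"
      by (rule arg_cong[where f = card]) auto
    also have "\<dots> = card {q \<in> L. q < p} + part_row L p"
      unfolding part_row_def by (rule card_Un_disjoint) (use fin in auto)
    finally have "card L = card {q \<in> L. q < p} + part_row L p" .
    with part_row_ge_1[OF fin that] show ?thesis by linarith
  qed
  have "(i, j) \<in> KN (UNIV - L) \<longleftrightarrow> 1 \<le> i \<and> i \<le> card L \<and> 1 \<le> j \<and>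
      (\<exists>p < length P. \<not> P ! p \<and> length (filter Not (take p P)) = card L - i
        \<and> j \<le> length (filter id (take p P)))"
    unfolding KN_def Let_def P_def[symmetric] north by simp
  also have "\<dots> \<longleftrightarrow> (\<exists>p\<in>L. (1 \<le> i \<and> i \<le> card L \<and> card {q \<in> L. q < p} = card L - i)
      \<and> 1 \<le> j \<and> j \<le> gaps_below L p)"
    using le_Max step below east by fastforce
  also have "\<dots> \<longleftrightarrow> (\<exists>p\<in>L. i = part_row L p \<and> 1 \<le> j \<and> j \<le> gaps_below L p)"
    using row by auto
  finally show ?thesis .
qed

lemma part_row_less_iff:
  assumes "finite L" "p \<in> L" "q \<in> L"
  shows "part_row L p < part_row L q \<longleftrightarrow> q < p"
proof
  assume "q < p"
  then have "{x \<in> L. p \<le> x} \<subseteq> {x \<in> L. q \<le> x}" "q \<in> {x \<in> L. q \<le> x} - {x \<in> L. p \<le> x}"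
    using assms(3) by auto
  then have "{x \<in> L. p \<le> x} \<subset> {x \<in> L. q \<le> x}" by blast
  then show "part_row L p < part_row L q"
    unfolding part_row_def using assms(1) by (simp add: psubset_card_mono)
next
  assume "part_row L p < part_row L q"
  moreover have "p \<le> q \<Longrightarrow> part_row L q \<le> part_row L p"
    unfolding part_row_def using assms(1) by (intro card_mono) auto
  ultimately show "q < p" by linarith
qed

lemma inj_on_part_row:
  assumes "finite L" shows "inj_on (part_row L) L"
proof (rule inj_onI, rule ccontr)
  fix p q assume "p \<in> L" "q \<in> L" "part_row L p = part_row L q" "p \<noteq> q"
  then show False using part_row_less_iff[OF assms, of p q] part_row_less_iff[OF assms, of q p] by linarith
qed

lemma part_row_Max:
  assumes "finite L" "L \<noteq> {}" shows "part_row L (Max L) = 1"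
proof -
  have "{q \<in> L. Max L \<le> q} = {Max L}"
    using Max_ge[OF assms(1)] Max_in[OF assms] by (auto intro: le_antisym)
  then show ?thesis by (simp add: part_row_def)
qed

lemma gaps_below_less_iff: "t \<notin> L \<Longrightarrow> gaps_below L t < gaps_below L q \<longleftrightarrow> t < q"
proof
  assume "t \<notin> L" "t < q"
  then have "{x. x < t \<and> x \<notin> L} \<subset> {x. x < q \<and> x \<notin> L}" by auto
  then show "gaps_below L t < gaps_below L q"
    unfolding gaps_below_def by (simp add: psubset_card_mono)
next
  assume "gaps_below L t < gaps_below L q"
  moreover have "q \<le> t \<Longrightarrow> gaps_below L q \<le> gaps_below L t"
    unfolding gaps_below_def by (intro card_mono) auto
  ultimately show "t < q" by linarith
qed

lemma hook_length_KN_complement: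
  assumes fin: "finite L" and t: "t \<notin> L" and p: "p \<in> L" "t < p"
  shows "hook_length (KN (UNIV - L)) (part_row L p) (gaps_below L t + 1) = p - t"
proof -
  define Y c where "Y = KN (UNIV - L)" and "c = gaps_below L t + 1"
  have Y: "(i, j) \<in> Y \<longleftrightarrow> (\<exists>q\<in>L. i = part_row L q \<and> 1 \<le> j \<and> j \<le> gaps_below L q)" for i j
    unfolding Y_def by (rule mem_KN_complement_iff[OF fin])
  have c_le: "c \<le> gaps_below L q \<longleftrightarrow> t < q" for q
    using gaps_below_less_iff[OF t] by (simp add: c_def Suc_le_eq)
  have "1 \<le> c" by (simp add: c_def)
  have arm: "{j. c < j \<and> (part_row L p, j) \<in> Y} = {c<..gaps_below L p}"
    using p inj_on_part_row[OF fin] by (auto simp: Y inj_on_def)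
  have leg: "{i. part_row L p < i \<and> (i, c) \<in> Y} = part_row L ` {q \<in> L. t < q \<and> q < p}"
    using p \<open>1 \<le> c\<close> by (auto simp: Y c_le part_row_less_iff[OF fin])
  have "gaps_below L p = c + card {x. t < x \<and> x < p \<and> x \<notin> L}"
  proof -
    have "{x. x < p \<and> x \<notin> L} = insert t ({x. x < t \<and> x \<notin> L} \<union> {x. t < x \<and> x < p \<and> x \<notin> L})"
      using p t by auto
    moreover have "finite {x. x < t \<and> x \<notin> L}" "finite {x. t < x \<and> x < p \<and> x \<notin> L}"
      by (auto intro: finite_subset[of _ "{..<p}"] finite_subset[of _ "{..<t}"])
    ultimately show ?thesis
      by (simp add: gaps_below_def c_def card_Un_disjoint disjoint_iff)
  qed
  moreover have "card {q \<in> L. t < q \<and> q < p} + card {x. t < x \<and> x < p \<and> x \<notin> L} = p - t - 1"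
  proof -
    have "{t<..<p} = {q \<in> L. t < q \<and> q < p} \<union> {x. t < x \<and> x < p \<and> x \<notin> L}" by auto
    then have "card {t<..<p} = card {q \<in> L. t < q \<and> q < p} + card {x. t < x \<and> x < p \<and> x \<notin> L}"
      by (simp add: card_Un_disjoint disjoint_iff)
    then show ?thesis by simp
  qed
  moreover have "card {i. part_row L p < i \<and> (i, c) \<in> Y} = card {q \<in> L. t < q \<and> q < p}"
    unfolding leg by (rule card_image) (use inj_on_part_row[OF fin] in \<open>auto simp: inj_on_def\<close>)
  moreover have "hook_length Y (part_row L p) c
      = card {c<..gaps_below L p} + card {i. part_row L p < i \<and> (i, c) \<in> Y} + 1"
    by (simp only: hook_length_def arm)
  ultimately have "hook_length Y (part_row L p) c = p - t"
    using p(2) by simp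
  then show ?thesis by (simp only: Y_def c_def)
qed

lemma part_row_image_above:
  assumes "finite L"
  shows "part_row L ` {p \<in> L. t < p} = {1..card {p \<in> L. t < p}}"
proof (rule card_subset_eq)
  show "part_row L ` {p \<in> L. t < p} \<subseteq> {1..card {p \<in> L. t < p}}"
  proof
    fix i assume "i \<in> part_row L ` {p \<in> L. t < p}"
    then obtain p where p: "p \<in> L" "t < p" "i = part_row L p" by blast
    then have "{q \<in> L. p \<le> q} \<subseteq> {p \<in> L. t < p}" by auto
    then have "i \<le> card {p \<in> L. t < p}" using assms p by (simp add: part_row_def card_mono)
    then show "i \<in> {1..card {p \<in> L. t < p}}" using part_row_ge_1[OF assms p(1)] p by simp
  qed
  show "card (part_row L ` {p \<in> L. t < p}) = card {1..card {p \<in> L. t < p}}"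
    using inj_on_part_row[OF assms] by (simp add: card_image inj_on_subset)
qed simp

lemma sum_hook_length_KN_column:
  assumes fin: "finite L" and t: "t \<notin> L"
  shows "(\<Sum>i = 1..card {p \<in> L. t < p}. hook_length (KN (UNIV - L)) i (gaps_below L t + 1))
    = (\<Sum>p \<in> {p \<in> L. t < p}. p - t)"
proof -
  have "inj_on (part_row L) {p \<in> L. t < p}" using inj_on_part_row[OF fin] by (rule inj_on_subset) auto
  then have "(\<Sum>i = 1..card {p \<in> L. t < p}. hook_length (KN (UNIV - L)) i (gaps_below L t + 1))
      = (\<Sum>p \<in> {p \<in> L. t < p}. hook_length (KN (UNIV - L)) (part_row L p) (gaps_below L t + 1))"
    unfolding part_row_image_above[OF fin, symmetric] by (rule sum.reindex_cong) simp_all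
  also have "\<dots> = (\<Sum>p \<in> {p \<in> L. t < p}. p - t)"
    using hook_length_KN_complement[OF fin t] by (intro sum.cong) simp_all
  finally show ?thesis .
qed

lemma card_less_enumerate:
  fixes S :: "nat set"
  assumes "infinite S"
  shows "card {x \<in> S. x < enumerate S n} = n"
proof -
  have "{x \<in> S. x < enumerate S n} = enumerate S ` {..<n}"
  proof (intro equalityI subsetI)
    fix x assume "x \<in> {x \<in> S. x < enumerate S n}"
    moreover then obtain i where "enumerate S i = x" using enumerate_Ex[OF assms] by blast
    ultimately show "x \<in> enumerate S ` {..<n}" using assms by auto
  qed (use assms enumerate_in_set in auto)
  moreover have "inj_on (enumerate S) {..<n}"
    using inj_enumerate[OF assms] by (rule inj_on_subset) simp
  ultimately show ?thesis by (simp add: card_image)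
qed

lemma unrefinable_setD:
  assumes "L \<in> unrefinable_set N"
  shows "finite L" "L \<noteq> {}" "0 \<notin> L" "\<Sum>L = N" "\<not> refinable L"
  using assms by (auto simp: unrefinable_set_def distinct_partition_def)

lemma not_refinable_if_missing_parts_large:
  assumes "finite L" "\<And>a. a \<in> missing_parts L \<Longrightarrow> Max L \<le> 2 * a"
  shows "\<not> refinable L"
proof
  assume "refinable L"
  then obtain a b where "a \<in> missing_parts L" "b \<in> missing_parts L" "a \<noteq> b" "a + b \<in> L"
    unfolding refinable_def by blast
  moreover from \<open>a + b \<in> L\<close> have "a + b \<le> Max L" using assms(1) by simp
  ultimately show False using assms(2)[of a] assms(2)[of b] by linarith
qed

lemma unrefinable_T_Max_witness:
  fixes n :: nat
  assumes "n \<ge> 6"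
  defines "W \<equiv> {1..n - 3} \<union> {n + 1, 2 * n - 4}"
  shows "W \<in> unrefinable_set (T n)" and "Max W = 2 * n - 4"
proof -
  show Max: "Max W = 2 * n - 4"
    unfolding W_def using assms by (intro Max_eqI) auto
  have "T n = T (n - 3) + (n - 2) + (n - 1) + n" using assms T_minus_3 by simp
  moreover have "\<Sum>W = T (n - 3) + (n + 1) + (2 * n - 4)"
  proof -
    have "n + 1 \<notin> {1..n - 3}" "2 * n - 4 \<notin> {1..n - 3}" "n + 1 \<noteq> 2 * n - 4"
      using assms by auto
    then show ?thesis by (simp add: W_def T_eq_sum)
  qed
  ultimately have "\<Sum>W = T n"
    using assms by linarith
  moreover have "card W \<ge> 2"
  proof -
    have "{n + 1, 2 * n - 4} \<subseteq> W" by (auto simp: W_def)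
    from card_mono[OF _ this] show ?thesis using assms by (simp add: W_def)
  qed
  moreover have "\<not> refinable W"
  proof (rule not_refinable_if_missing_parts_large)
    fix a assume "a \<in> missing_parts W"
    then have "n - 3 < a" by (auto simp: missing_parts_def W_def)
    then show "Max W \<le> 2 * a" using Max by linarith
  qed (simp add: W_def)
  ultimately show "W \<in> unrefinable_set (T n)"
    using assms by (simp add: unrefinable_set_def distinct_partition_def W_def)
qed

lemma half_missing_fold_image:
  assumes L: "L \<in> unrefinable_set N" and half: "card (missing_parts L) = Max L div 2"
  shows "(\<lambda>x. min x (Max L - x)) ` missing_parts L = {1..Max L div 2}"
proof -
  define m where "m = Max L"
  define f where "f x = min x (m - x)" for x
  have mL: "m \<in> L" using unrefinable_setD[OF L] by (simp add: m_def)
  have M: "missing_parts L = {1..m} - L" by (simp add: missing_parts_def m_def)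
  have inj: "inj_on f (missing_parts L)"
  proof (rule inj_onI)
    fix x y assume x: "x \<in> missing_parts L" and y: "y \<in> missing_parts L" and "f x = f y"
    show "x = y"
    proof (rule ccontr)
      assume "x \<noteq> y"
      with \<open>f x = f y\<close> x y have "x + y = m" by (auto simp: M f_def min_def split: if_splits)
      with x y \<open>x \<noteq> y\<close> mL unrefinable_setD(5)[OF L] show False by (auto simp: refinable_def)
    qed
  qed
  have "f ` missing_parts L \<subseteq> {1..m div 2}"
  proof
    fix y assume "y \<in> f ` missing_parts L"
    then obtain x where "x \<in> missing_parts L" "y = f x" by blast
    moreover from this(1) mL have "1 \<le> x" "x < m" by (auto simp: M order.strict_iff_not)
    ultimately show "y \<in> {1..m div 2}" by (auto simp: f_def)
  qed
  moreover have "card (f ` missing_parts L) = card {1..m div 2}"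
    using card_image[OF inj] half by (simp add: m_def)
  ultimately show ?thesis
    by (intro card_subset_eq) (simp_all add: f_def m_def)
qed

lemma half_missing_reflect_iff:
  assumes L: "L \<in> unrefinable_set N" and half: "card (missing_parts L) = Max L div 2"
    and a: "1 \<le> a" "2 * a < Max L"
  shows "a \<in> L \<longleftrightarrow> Max L - a \<notin> L"
proof -
  define m where "m = Max L"
  have mL: "m \<in> L" using unrefinable_setD[OF L] by (simp add: m_def)
  have M: "missing_parts L = {1..m} - L" by (simp add: missing_parts_def m_def)
  have "a \<in> (\<lambda>x. min x (m - x)) ` missing_parts L"
    using half_missing_fold_image[OF L half] a by (simp add: m_def)
  then have "a \<notin> L \<or> m - a \<notin> L"
    by (auto simp: M min_def split: if_splits)
  moreover have "a \<in> L \<or> m - a \<in> L"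
  proof (rule ccontr)
    assume "\<not> (a \<in> L \<or> m - a \<in> L)"
    then have "a \<in> missing_parts L" "m - a \<in> missing_parts L" "a \<noteq> m - a" "a + (m - a) \<in> L"
      using a mL by (auto simp: M m_def)
    then show False using unrefinable_setD(5)[OF L] by (auto simp: refinable_def)
  qed
  ultimately show ?thesis by (auto simp: m_def)
qed

lemma half_missing_midpoint_notin:
  assumes L: "L \<in> unrefinable_set N" and half: "card (missing_parts L) = Max L div 2"
    and "even (Max L)"
  shows "Max L div 2 \<notin> L"
proof -
  define m where "m = Max L"
  have "m \<in> L" "0 \<notin> L" using unrefinable_setD[OF L] by (simp_all add: m_def)
  then have "1 \<le> m div 2" using \<open>even (Max L)\<close> by (cases m) (auto simp: m_def)
  then have "m div 2 \<in> (\<lambda>x. min x (m - x)) ` missing_parts L"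
    using half_missing_fold_image[OF L half] by (simp add: m_def)
  then obtain x where "x \<in> missing_parts L" "m div 2 = min x (m - x)" by blast
  moreover have "x \<le> m" using \<open>x \<in> missing_parts L\<close> by (simp add: missing_parts_def m_def)
  ultimately show ?thesis using \<open>even (Max L)\<close>
    by (auto simp: missing_parts_def m_def min_def split: if_splits elim!: evenE)
qed

lemma half_missing_upper_parts:
  assumes L: "L \<in> unrefinable_set N" and half: "card (missing_parts L) = Max L div 2"
    and r: "r = (Max L - 1) div 2"
  shows "{p \<in> L. r < p \<and> p < Max L} = (\<lambda>a. Max L - a) ` ({1..r} - L)"
proof (intro equalityI subsetI)
  fix p assume "p \<in> {p \<in> L. r < p \<and> p < Max L}"
  then have p: "p \<in> L" "r < p" "p < Max L" by auto
  have "even (Max L) \<Longrightarrow> p \<noteq> Max L div 2"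
    using half_missing_midpoint_notin[OF L half] p(1) by auto
  then have "2 * (Max L - p) < Max L" using p r by presburger
  moreover have "Max L - (Max L - p) = p" using p(3) by simp
  ultimately have "Max L - p \<in> {1..r} - L"
    using half_missing_reflect_iff[OF L half, of "Max L - p"] p r by auto
  then show "p \<in> (\<lambda>a. Max L - a) ` ({1..r} - L)"
    using \<open>Max L - (Max L - p) = p\<close> by (metis image_eqI)
next
  fix p assume "p \<in> (\<lambda>a. Max L - a) ` ({1..r} - L)"
  then obtain a where a: "1 \<le> a" "a \<le> r" "a \<notin> L" and p: "p = Max L - a" by auto
  have "2 * a < Max L" using a r by linarith
  then show "p \<in> {p \<in> L. r < p \<and> p < Max L}"
    using half_missing_reflect_iff[OF L half a(1)] a p r by auto
qed

lemma half_missing_sum: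
  assumes L: "L \<in> unrefinable_set N" and half: "card (missing_parts L) = Max L div 2"
    and r: "r = (Max L - 1) div 2"
  shows "N = T r + Max L + (\<Sum>a\<in>{1..r} - L. Max L - 2 * a)"
proof -
  define m D where "m = Max L" and "D = {1..r} - L"
  have fin: "finite L" and mL: "m \<in> L" and "0 \<notin> L" and sum: "\<Sum>L = N"
    using unrefinable_setD[OF L] by (simp_all add: m_def)
  have rm: "2 * r < m" using \<open>0 \<notin> L\<close> mL r m_def by (cases m) auto
  have upper: "{p \<in> L. r < p \<and> p < m} = (\<lambda>a. m - a) ` D"
    using half_missing_upper_parts[OF L half r] by (simp add: m_def D_def)
  have parts: "L = (L \<inter> {1..r}) \<union> (\<lambda>a. m - a) ` D \<union> {m}"
  proof -
    have "x \<le> m" if "x \<in> L" for x using that fin by (simp add: m_def)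
    moreover have "x \<noteq> 0" if "x \<in> L" for x using that \<open>0 \<notin> L\<close> by metis
    ultimately have "L = (L \<inter> {1..r}) \<union> {p \<in> L. r < p \<and> p < m} \<union> {m}"
      using mL by fastforce
    then show ?thesis by (simp only: upper)
  qed
  have inj: "inj_on (\<lambda>a. m - a) D" using rm by (auto simp: D_def inj_on_def)
  have D: "finite D" "(L \<inter> {1..r}) \<inter> (\<lambda>a. m - a) ` D = {}" "m \<notin> (\<lambda>a. m - a) ` D"
    using rm by (auto simp: D_def)
  have "\<Sum>L = \<Sum>(L \<inter> {1..r}) + \<Sum>((\<lambda>a. m - a) ` D) + m"
    using D rm by (subst parts) (simp add: sum.union_disjoint)
  also have "\<Sum>((\<lambda>a. m - a) ` D) = (\<Sum>a\<in>D. m - 2 * a) + \<Sum>D"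
    unfolding sum.reindex[OF inj] sum.distrib[symmetric] using rm
    by (intro sum.cong) (auto simp: D_def)
  finally have "\<Sum>L = (\<Sum>(L \<inter> {1..r}) + \<Sum>D) + m + (\<Sum>a\<in>D. m - 2 * a)"
    by simp
  also have "\<Sum>(L \<inter> {1..r}) + \<Sum>D = T r"
    using sum.Int_Diff[of "{1..r}" id L] by (simp add: T_eq_sum D_def Int_commute)
  finally show ?thesis using sum by (simp add: m_def D_def)
qed

lemma Max_le_of_reflected_sum:
  fixes m r n :: nat and D :: "nat set"
  assumes "2 \<le> n" and r: "r = (m - 1) div 2" and D: "D \<subseteq> {1..r}"
    and sum: "T n = T r + m + (\<Sum>a\<in>D. m - 2 * a)"
  shows "m \<le> 2 * n - 4"
proof (rule ccontr)
  assume "\<not> m \<le> 2 * n - 4"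
  then consider "2 * n - 1 \<le> m" | "n \<ge> 2" "m = 2 * n - 2" | "n \<ge> 2" "m = 2 * n - 3"
    by linarith
  then show False
  proof cases
    case 1
    then have "T (n - 1) \<le> T r" using r by (intro T_mono) linarith
    moreover have "T n = T (n - 1) + n" using T_Suc[of "n - 1"] \<open>2 \<le> n\<close> by simp
    ultimately show False using sum 1 \<open>2 \<le> n\<close> by linarith
  next
    case 2
    have "T n = T (n - 2) + (n - 1) + n" using 2 T_minus_2 by simp
    moreover have "r = n - 2" using 2 r by simp
    moreover note sum
    ultimately have "(\<Sum>a\<in>D. m - 2 * a) = 1" using 2 by simp
    moreover have "(\<Sum>a\<in>D. m - 2 * a) = 2 * (\<Sum>a\<in>D. n - 1 - a)"
      using 2 by (simp add: sum_distrib_left diff_mult_distrib2)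
    ultimately show False by presburger
  next
    case 3
    have "T n = T (n - 2) + (n - 1) + n" using 3 T_minus_2 by simp
    moreover have "r = n - 2" using 3 r by simp
    moreover note sum
    ultimately have two: "(\<Sum>a\<in>D. m - 2 * a) = 2" using 3 by simp
    have "finite D" using D finite_subset by blast
    have "D \<subseteq> {n - 2}"
    proof
      fix a assume "a \<in> D"
      then have "m - 2 * a \<le> 2" using member_le_sum[of a D "\<lambda>a. m - 2 * a"] \<open>finite D\<close> two by simp
      moreover have "1 \<le> a" "a \<le> n - 2" using \<open>a \<in> D\<close> D \<open>r = n - 2\<close> by auto
      ultimately show "a \<in> {n - 2}" using 3 by auto
    qed
    then have "(\<Sum>a\<in>D. m - 2 * a) \<le> (\<Sum>a\<in>{n - 2}. m - 2 * a)" by (intro sum_mono2) auto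
    then show False using two 3 by simp
  qed
qed

lemma overline_UD:
  assumes "lam \<in> overline_U N"
  shows "lam \<in> unrefinable_set N" "card (missing_parts lam) = Max lam div 2"
    and "\<And>mu. mu \<in> unrefinable_set N \<Longrightarrow> Max mu \<le> Max lam"
  using assms by (auto simp: overline_U_def maximal_unrefinable_def)

lemma Max_overline_U_T:
  assumes n: "6 \<le> n" and lam: "lam \<in> overline_U (T n)"
  shows "Max lam = 2 * n - 4"
proof -
  note L = overline_UD(1)[OF lam] and half = overline_UD(2)[OF lam]
    and maximal = overline_UD(3)[OF lam]
  have "Max lam \<le> 2 * n - 4"
    using n half_missing_sum[OF L half refl] by (intro Max_le_of_reflected_sum[OF _ refl]) auto
  moreover have "2 * n - 4 \<le> Max lam"
    using maximal[OF unrefinable_T_Max_witness(1)[OF n]] unrefinable_T_Max_witness(2)[OF n] by simp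
  ultimately show ?thesis by simp
qed

lemma overline_U_T_gap_sum:
  assumes n: "6 \<le> n" and lam: "lam \<in> overline_U (T n)"
  shows "2 * (\<Sum>a\<in>{1..n - 3} - lam. n - 2 - a) = n + 1"
proof -
  note L = overline_UD(1)[OF lam] and half = overline_UD(2)[OF lam]
  have m: "Max lam = 2 * n - 4" by (rule Max_overline_U_T[OF n lam])
  have "n - 3 = (Max lam - 1) div 2" using m n by simp
  from half_missing_sum[OF L half this]
  have "T n = T (n - 3) + (2 * n - 4) + (\<Sum>a\<in>{1..n - 3} - lam. 2 * n - 4 - 2 * a)"
    by (simp only: m)
  moreover have "T n = T (n - 3) + (n - 2) + (n - 1) + n" using n T_minus_3 by simp
  moreover have "(\<Sum>a\<in>{1..n - 3} - lam. 2 * n - 4 - 2 * a) = 2 * (\<Sum>a\<in>{1..n - 3} - lam. n - 2 - a)"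
    unfolding sum_distrib_left by (intro sum.cong) auto
  ultimately show ?thesis using n by linarith
qed

lemma overline_U_T_middle:
  assumes n: "6 \<le> n" and lam: "lam \<in> overline_U (T n)"
  shows "n - 2 \<notin> lam"
    and "{p \<in> lam. n - 2 < p} = insert (2 * n - 4) ((\<lambda>a. 2 * n - 4 - a) ` ({1..n - 3} - lam))"
    and "gaps_below lam (n - 2) = card ({1..n - 3} - lam) + 1"
proof -
  note L = overline_UD(1)[OF lam] and half = overline_UD(2)[OF lam]
  have m: "Max lam = 2 * n - 4" by (rule Max_overline_U_T[OF n lam])
  have "Max lam = 2 * (n - 2)" using m n by simp
  then show mid: "n - 2 \<notin> lam"
    using half_missing_midpoint_notin[OF L half] by simp
  have "n - 3 = (Max lam - 1) div 2" using m n by simp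
  from half_missing_upper_parts[OF L half this]
  have upper: "{p \<in> lam. n - 3 < p \<and> p < 2 * n - 4} = (\<lambda>a. 2 * n - 4 - a) ` ({1..n - 3} - lam)"
    by (simp only: m)
  have "p \<le> 2 * n - 4" if "p \<in> lam" for p
    using that Max_ge[OF unrefinable_setD(1)[OF L]] m by metis
  moreover have "2 * n - 4 \<in> lam" using Max_in[OF unrefinable_setD(1,2)[OF L]] m by simp
  moreover have "n - 2 < p \<longleftrightarrow> n - 3 < p" if "p \<in> lam" for p
    using that mid n by (cases "p = n - 2") auto
  ultimately show "{p \<in> lam. n - 2 < p} = insert (2 * n - 4) ((\<lambda>a. 2 * n - 4 - a) ` ({1..n - 3} - lam))"
    unfolding upper[symmetric] using n by (auto simp: order.order_iff_strict)
  have "{x. x < n - 2 \<and> x \<notin> lam} = insert 0 ({1..n - 3} - lam)"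
    using unrefinable_setD(3)[OF L] n by auto
  then show "gaps_below lam (n - 2) = card ({1..n - 3} - lam) + 1"
    by (simp add: gaps_below_def)
qed

lemma overline_U_T_parts_above_middle:
  assumes n: "6 \<le> n" and lam: "lam \<in> overline_U (T n)"
  shows "card {p \<in> lam. n - 2 < p} = gaps_below lam (n - 2)"
    and "2 * (\<Sum>p \<in> {p \<in> lam. n - 2 < p}. p - (n - 2)) = 3 * n - 3"
proof -
  define D where "D = {1..n - 3} - lam"
  note mid = overline_U_T_middle[OF n lam, folded D_def]
  have inj: "inj_on (\<lambda>a. 2 * n - 4 - a) D" and "finite D"
    and top: "2 * n - 4 \<notin> (\<lambda>a. 2 * n - 4 - a) ` D"
    using n by (auto simp: D_def inj_on_def)
  show "card {p \<in> lam. n - 2 < p} = gaps_below lam (n - 2)"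
    using mid(2,3) \<open>finite D\<close> top card_image[OF inj] by simp
  have "(\<Sum>p \<in> {p \<in> lam. n - 2 < p}. p - (n - 2))
      = (2 * n - 4 - (n - 2)) + (\<Sum>p \<in> (\<lambda>a. 2 * n - 4 - a) ` D. p - (n - 2))"
    unfolding mid(2) using \<open>finite D\<close> top by (rule sum.insert[OF finite_imageI])
  also have "(\<Sum>p \<in> (\<lambda>a. 2 * n - 4 - a) ` D. p - (n - 2)) = (\<Sum>a\<in>D. 2 * n - 4 - a - (n - 2))"
    by (rule sum.reindex_cong[OF inj refl refl])
  also have "\<dots> = (\<Sum>a\<in>D. n - 2 - a)"
    by (rule sum.cong) auto
  finally show "2 * (\<Sum>p \<in> {p \<in> lam. n - 2 < p}. p - (n - 2)) = 3 * n - 3"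
    using overline_U_T_gap_sum[OF n lam, folded D_def] n by simp
qed

theorem proposition3p10:
  fixes k n z :: nat and lam :: "nat set"
  assumes "k \<ge> 4" and "n = 2 * k - 1"
    and "lam \<in> overline_U (T n)"
    and "enumerate (UNIV - lam) z = n - 2"
  shows "(\<Sum>i = 2..z. hook_length (KN (UNIV - lam)) i (z + 1)) = k"
proof -
  have n: "6 \<le> n" using assms(1,2) by simp
  note fin = unrefinable_setD(1,2)[OF overline_UD(1)[OF assms(3)]]
  define h where "h i = hook_length (KN (UNIV - lam)) i (z + 1)" for i
  have z: "z = gaps_below lam (n - 2)"
    using card_less_enumerate[of "UNIV - lam" z] fin(1) assms(4)
    by (simp add: gaps_below_def Diff_infinite_finite conj_commute)
  note above = overline_U_T_parts_above_middle[OF n assms(3), folded z]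
  have "(\<Sum>i = 1..z. h i) = (\<Sum>p \<in> {p \<in> lam. n - 2 < p}. p - (n - 2))"
    using sum_hook_length_KN_column[OF fin(1) overline_U_T_middle(1)[OF n assms(3)]] above(1)
    by (simp only: h_def z)
  moreover have "h 1 = n - 2"
    using hook_length_KN_complement[OF fin(1) overline_U_T_middle(1)[OF n assms(3)] Max_in[OF fin]]
      part_row_Max[OF fin] Max_overline_U_T[OF n assms(3)] n by (simp add: h_def z)
  moreover have "1 \<le> z" using z overline_U_T_middle(3)[OF n assms(3)] by simp
  then have "(\<Sum>i = 1..z. h i) = h 1 + (\<Sum>i = 2..z. h i)"
    using sum.atLeast_Suc_atMost[of 1 z h] by (simp add: numeral_2_eq_2)
  ultimately show ?thesis using above(2) assms(1,2) by (simp add: h_def)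
qed

end
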